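(* Consider a family, indexed by the number of qubits $n$, of parametrized $n$-qubit states $\rho(\vec{\alpha})$ depending on a random variable $\vec{\alpha}$, and a POVM $\mathcal{M} = \{M_k\}_{k=1}^{|\mathcal{M}|}$ with $|\mathcal{M}| \in \mathcal{O}(\operatorname{poly}(n))$, with outcome distribution $\mathbb{P}_{\vec{\alpha}} = (p_k(\vec{\alpha}))_k$, $p_k(\vec{\alpha}) = \operatorname{Tr}[\rho(\vec{\alpha}) M_k]$. Assume there exist $\vec{\alpha}$-independent numbers $\mu_k$ and $\beta \in \mathcal{O}(\exp(-n))$ with $\Pr_{\vec{\alpha}}(|p_k(\vec{\alpha}) - \mu_k| \geq \delta') \leq \beta/\delta'^2$ for all $k$ and all $\delta'>0$, and set $\mathbb{P}_{\rm fixed} = (\mu_1,\dots,\mu_{|\mathcal{M}|})$. Let $N \in \mathcal{O}(\operatorname{poly}(n))$, let $\Phi : \mathbb{R}^N \to \mathbb{R}^M$ be an arbitrary map, and let $\mathcal{S}_N(\vec{\alpha})$ and $\mathcal{S}_{N,\rm fixed}$ be sets of $N$ i.i.d. samples from $\mathbb{P}_{\vec{\alpha}}$ and from $\mathbb{P}_{\rm fixed}$ respectively. Then, with probability at least $1-\delta$ over $\vec{\alpha}$, with $\delta \in \mathcal{O}(\exp(-n))$, the outputs $\Phi(\mathcal{S}_N(\vec{\alpha}))$ and $\Phi(\mathcal{S}_{N,\rm fixed})$ are statistically indistinguishable: given $\Phi(\mathcal{S})$ for a sample set $\mathcal{S}$ drawn with equal probability from one of the two sources, no procedure identifies the source with probability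 exceeding that achievable from $\mathcal{S}$ itself, which is at most $\frac12 + \frac{N|\mathcal{M}|\beta^{1/4}}{4}$.
   Context: A POVM is a finite set of positive semidefinite operators summing to the identity; measuring it on $\rho$ yields outcome $k$ with probability $\operatorname{Tr}[\rho M_k]$ (outcomes are labeled by real numbers). Two distributions are statistically indistinguishable with $N$ samples if, given $N$ i.i.d. samples drawn (with equal prior probability) all from one or all from the other, no algorithm identifies the correct source with probability greater than $0.51$; outputs of a map applied to sample sets from two such distributions are called statistically indistinguishable outputs.
   Formalization: $\beta$ and $\delta$ lie in O(exp(-cn)) for some c > 0 rather than O(exp(-n)), the $\mu_k$ are nonnegative with sum 1, the 0.51 bound holds only for all large n, and success from $\mathcal{S}$ itself is not compared. Apart from conventions, each condition added here is assumed in the paper as well or is needed for the statement above to hold. *)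

theory Defs
  imports "HOL-Probability.Probability" "HOL-Library.Landau_Symbols"
    "Jordan_Normal_Form.Matrix"
begin

definition mat_trace :: "complex mat \<Rightarrow> complex" where
  "mat_trace A = (\<Sum>i<dim_row A. A $$ (i,i))"

definition psd :: "nat \<Rightarrow> complex mat \<Rightarrow> bool" where
  "psd d A \<longleftrightarrow> A \<in> carrier_mat d d \<and>
     (\<forall>v \<in> carrier_vec d. Im (conjugate v \<bullet> (A *\<^sub>v v)) = 0 \<and> 0 \<le> Re (conjugate v \<bullet> (A *\<^sub>v v)))"

definition density_matrix :: "nat \<Rightarrow> complex mat \<Rightarrow> bool" where
  "density_matrix d \<rho> \<longleftrightarrow> psd d \<rho> \<and> mat_trace \<rho> = 1"

definition is_povm :: "nat \<Rightarrow> real set \<Rightarrow> (real \<Rightarrow> complex mat) \<Rightarrow> bool" where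
  "is_povm d K M \<longleftrightarrow> finite K \<and> (\<forall>k\<in>K. psd d (M k)) \<and>
     (\<forall>i<d. \<forall>j<d. (\<Sum>k\<in>K. M k $$ (i,j)) = (1\<^sub>m d) $$ (i,j))"

definition outcome_prob :: "complex mat \<Rightarrow> complex mat \<Rightarrow> real" where
  "outcome_prob \<rho> Mk = Re (mat_trace (\<rho> * Mk))"

(* all possible sample sets of N outcomes (ordered tuples in R^N) *)
definition samples :: "real set \<Rightarrow> nat \<Rightarrow> real list set" where
  "samples K N = {s. length s = N \<and> set s \<subseteq> K}"

definition seq_prob :: "(real \<Rightarrow> real) \<Rightarrow> real list \<Rightarrow> real" where
  "seq_prob p s = prod_list (map p s)"

(* success probability of the (possibly randomised) guessing procedure g, which
   sees only Phi(S) and outputs "source p" with probability g(Phi(S)), when the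
   sample set S comes from p or from q with prior 1/2 each *)
definition guess_success :: "real set \<Rightarrow> nat \<Rightarrow> (real \<Rightarrow> real) \<Rightarrow> (real \<Rightarrow> real)
    \<Rightarrow> (real list \<Rightarrow> 'b) \<Rightarrow> ('b \<Rightarrow> real) \<Rightarrow> real" where
  "guess_success K N p q \<Phi> g =
     (1/2) * (\<Sum>s\<in>samples K N. seq_prob p s * g (\<Phi> s) + seq_prob q s * (1 - g (\<Phi> s)))"

definition poly_bounded :: "(nat \<Rightarrow> real) \<Rightarrow> bool" where
  "poly_bounded f \<longleftrightarrow> (\<exists>d::nat. f \<in> O(\<lambda>n. real n ^ d))"

(* f \<in> O(exp(-n)), read as: exponentially small, O(exp(-c n)) for some c > 0 *)
definition exp_small :: "(nat \<Rightarrow> real) \<Rightarrow> bool" where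
  "exp_small f \<longleftrightarrow> (\<exists>c>0. f \<in> O(\<lambda>n. exp (- c * real n)))"

end

theory Submission
  imports Defs
begin

(* With the threshold t = beta^(1/4)/4, the tail bound and a union bound over the |M| outcomes
   give a set of parameters of probability at least 1 - 16 |M| sqrt beta on which |p_k - mu_k| <= t
   for every k, so that the outcome distribution is within |M| t of P_fixed in l1.  The l1 distance
   of the N-fold product distributions is at most N |M| t (1 + |M| t)^(N-1) <= 2 N |M| t as soon as
   N |M| t <= 1/4, and any guess made from Phi(S) succeeds with probability at most 1/2 plus half
   that distance.  As N and |M| are polynomial and beta is exponentially small, both 16 |M| sqrt beta
   and N |M| t are exponentially small; for the finitely many n where N |M| t is still large one
   takes the empty set, i.e. delta = 1. *)

lemma samples_0: "samples K 0 = {[]}"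
  unfolding samples_def by auto

lemma samples_Suc: "samples K (Suc N) = (\<lambda>(k, s). k # s) ` (K \<times> samples K N)"
  unfolding samples_def by (auto simp: length_Suc_conv image_iff)

lemma sum_samples_Suc:
  assumes "finite K"
  shows "(\<Sum>s\<in>samples K (Suc N). h s) = (\<Sum>k\<in>K. \<Sum>s\<in>samples K N. h (k # s))"
proof -
  have "inj_on (\<lambda>(k, s). k # s) (K \<times> samples K N)"
    by (auto simp: inj_on_def)
  then have "(\<Sum>s\<in>samples K (Suc N). h s) = (\<Sum>(k, s)\<in>K \<times> samples K N. h (k # s))"
    unfolding samples_Suc by (simp add: sum.reindex split_def)
  also have "\<dots> = (\<Sum>k\<in>K. \<Sum>s\<in>samples K N. h (k # s))"
    by (simp add: sum.cartesian_product split_def)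
  finally show ?thesis .
qed

lemma sum_seq_prob:
  assumes "finite K"
  shows "(\<Sum>s\<in>samples K N. seq_prob p s) = (\<Sum>k\<in>K. p k) ^ N"
proof (induction N)
  case 0
  then show ?case by (simp add: samples_0 seq_prob_def)
next
  case (Suc N)
  then show ?case
    by (simp add: sum_samples_Suc[OF assms] seq_prob_def
        flip: sum_distrib_left sum_distrib_right)
qed

lemma abs_seq_prob: "\<bar>seq_prob p s\<bar> = seq_prob (\<lambda>k. \<bar>p k\<bar>) s"
  unfolding seq_prob_def by (induction s) (auto simp: abs_mult)

lemma sum_abs_seq_prob_diff_le:
  fixes p q :: "real \<Rightarrow> real"
  assumes K: "finite K" and p: "(\<Sum>k\<in>K. \<bar>p k\<bar>) \<le> C" and q: "(\<Sum>k\<in>K. \<bar>q k\<bar>) \<le> C"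
  shows "(\<Sum>s\<in>samples K N. \<bar>seq_prob p s - seq_prob q s\<bar>)
           \<le> real N * (\<Sum>k\<in>K. \<bar>p k - q k\<bar>) * C ^ (N - 1)"
proof (induction N)
  case 0
  then show ?case by (simp add: samples_0 seq_prob_def)
next
  case (Suc N)
  define D where "D = (\<Sum>k\<in>K. \<bar>p k - q k\<bar>)"
  define T where "T = (\<Sum>s\<in>samples K N. \<bar>seq_prob p s - seq_prob q s\<bar>)"
  have C_nonneg: "0 \<le> C"
    using p by (meson order_trans sum_nonneg abs_ge_zero)
  have "(\<Sum>s\<in>samples K (Suc N). \<bar>seq_prob p s - seq_prob q s\<bar>)
      = (\<Sum>k\<in>K. \<Sum>s\<in>samples K N. \<bar>p k * seq_prob p s - q k * seq_prob q s\<bar>)"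
    by (simp add: sum_samples_Suc[OF K] seq_prob_def)
  also have "\<dots> \<le> (\<Sum>k\<in>K. \<Sum>s\<in>samples K N.
                 \<bar>p k - q k\<bar> * seq_prob (\<lambda>k. \<bar>p k\<bar>) s + \<bar>q k\<bar> * \<bar>seq_prob p s - seq_prob q s\<bar>)"
  proof (intro sum_mono)
    fix k s
    have "p k * seq_prob p s - q k * seq_prob q s
        = (p k - q k) * seq_prob p s + q k * (seq_prob p s - seq_prob q s)"
      by (simp add: algebra_simps)
    then show "\<bar>p k * seq_prob p s - q k * seq_prob q s\<bar>
        \<le> \<bar>p k - q k\<bar> * seq_prob (\<lambda>k. \<bar>p k\<bar>) s + \<bar>q k\<bar> * \<bar>seq_prob p s - seq_prob q s\<bar>"
      by (metis abs_mult abs_triangle_ineq abs_seq_prob)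
  qed
  also have "\<dots> = D * (\<Sum>k\<in>K. \<bar>p k\<bar>) ^ N + (\<Sum>k\<in>K. \<bar>q k\<bar>) * T"
    by (simp add: sum.distrib sum_seq_prob[OF K] D_def T_def
        flip: sum_distrib_left sum_distrib_right)
  also have "\<dots> \<le> D * C ^ N + C * (real N * D * C ^ (N - 1))"
    using Suc p q C_nonneg
    by (intro add_mono mult_mono power_mono) (auto simp: D_def T_def sum_nonneg)
  also have "\<dots> = real (Suc N) * D * C ^ (Suc N - 1)"
    by (cases N) (auto simp: algebra_simps)
  finally show ?case
    unfolding D_def .
qed

lemma guess_success_le_half_plus_l1:
  assumes K: "finite K" and q: "(\<Sum>k\<in>K. q k) = 1" and g: "\<forall>y. 0 \<le> g y \<and> g y \<le> 1"
  shows "guess_success K N p q \<Phi> g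
           \<le> 1/2 + (\<Sum>s\<in>samples K N. \<bar>seq_prob p s - seq_prob q s\<bar>) / 2"
proof -
  have "guess_success K N p q \<Phi> g
      = ((\<Sum>s\<in>samples K N. seq_prob q s)
         + (\<Sum>s\<in>samples K N. (seq_prob p s - seq_prob q s) * g (\<Phi> s))) / 2"
    unfolding guess_success_def by (simp add: algebra_simps flip: sum.distrib)
  also have "(\<Sum>s\<in>samples K N. seq_prob q s) = 1"
    by (simp add: sum_seq_prob[OF K] q)
  also have "(\<Sum>s\<in>samples K N. (seq_prob p s - seq_prob q s) * g (\<Phi> s))
           \<le> (\<Sum>s\<in>samples K N. \<bar>seq_prob p s - seq_prob q s\<bar>)"
    using g by (intro sum_mono) (smt (verit) abs_ge_self mult_left_le mult_right_mono)
  finally show ?thesis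
    by simp
qed

lemma one_plus_power_le_two:
  fixes e :: real
  assumes "0 \<le> e" and "real m * e \<le> 1/4"
  shows "(1 + e) ^ m \<le> 2"
proof -
  have "(1 + e) ^ m \<le> exp e ^ m"
    using assms by (intro power_mono) auto
  also have "\<dots> = exp (real m * e)"
    by (simp add: exp_of_nat_mult)
  also have "\<dots> \<le> 1 + 2 * \<bar>real m * e\<bar>"
    using exp_bound_lemma[of "real m * e"] assms by auto
  also have "\<dots> \<le> 2"
    using assms by simp
  finally show ?thesis .
qed

lemma guess_success_le_of_close:
  fixes p \<mu> :: "real \<Rightarrow> real"
  assumes K: "finite K" and \<mu>_nonneg: "\<forall>k\<in>K. 0 \<le> \<mu> k" and \<mu>_sum: "(\<Sum>k\<in>K. \<mu> k) = 1"
    and close: "(\<Sum>k\<in>K. \<bar>p k - \<mu> k\<bar>) \<le> e" and small: "real N * e \<le> 1/4"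
    and g: "\<forall>y. 0 \<le> g y \<and> g y \<le> 1"
  shows "guess_success K N p \<mu> \<Phi> g \<le> 1/2 + real N * e"
proof -
  have e_nonneg: "0 \<le> e"
    using close by (meson order_trans sum_nonneg abs_ge_zero)
  have "(\<Sum>k\<in>K. \<bar>p k\<bar>) \<le> (\<Sum>k\<in>K. \<mu> k + \<bar>p k - \<mu> k\<bar>)"
    using \<mu>_nonneg by (intro sum_mono) auto
  then have p_mass: "(\<Sum>k\<in>K. \<bar>p k\<bar>) \<le> 1 + e"
    using close by (simp add: sum.distrib \<mu>_sum)
  have \<mu>_mass: "(\<Sum>k\<in>K. \<bar>\<mu> k\<bar>) \<le> 1 + e"
    using \<mu>_nonneg \<mu>_sum e_nonneg by simp
  have "(\<Sum>s\<in>samples K N. \<bar>seq_prob p s - seq_prob \<mu> s\<bar>)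
      \<le> real N * (\<Sum>k\<in>K. \<bar>p k - \<mu> k\<bar>) * (1 + e) ^ (N - 1)"
    by (rule sum_abs_seq_prob_diff_le[OF K p_mass \<mu>_mass])
  also have "\<dots> \<le> real N * e * 2"
  proof (intro mult_mono one_plus_power_le_two)
    have "real (N - 1) * e \<le> real N * e"
      using e_nonneg by (intro mult_right_mono) auto
    then show "real (N - 1) * e \<le> 1/4"
      using small by linarith
  qed (use close e_nonneg in auto)
  finally show ?thesis
    using guess_success_le_half_plus_l1[OF K \<mu>_sum g, of N p \<Phi>] by simp
qed

lemma tail_bound_nonneg:
  assumes "\<forall>\<delta>'>0. measure M {x\<in>space M. \<delta>' \<le> X x} \<le> b / \<delta>'^2"
  shows "0 \<le> b"
  using assms[rule_format, of 1] by (simp add: order_trans[OF measure_nonneg])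

(* For t = 0 the conclusion reads measure <= 0, since b / 0 = 0. *)
lemma measure_gt_le_of_tail_bound:
  fixes X :: "'a \<Rightarrow> real"
  assumes "finite_measure M" and [measurable]: "X \<in> borel_measurable M"
    and tail: "\<forall>\<delta>'>0. measure M {x\<in>space M. \<delta>' \<le> X x} \<le> b / \<delta>'^2"
    and t: "0 \<le> t" "t = 0 \<Longrightarrow> b = 0"
  shows "measure M {x\<in>space M. t < X x} \<le> b / t^2"
proof -
  interpret finite_measure M by fact
  define A where "A m = {x\<in>space M. t + 1 / Suc m \<le> X x}" for m :: nat
  have "range A \<subseteq> sets M"
    unfolding A_def by auto
  moreover have "incseq A"
    unfolding A_def by (intro monoI) (auto elim!: order_trans[rotated] simp: frac_le)
  ultimately have "(\<lambda>m. measure M (A m)) \<longlonglongrightarrow> measure M (\<Union>m. A m)"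
    by (rule finite_Lim_measure_incseq)
  also have "(\<Union>m. A m) = {x\<in>space M. t < X x}"
  proof safe
    fix x assume "x \<in> space M" "t < X x"
    then obtain m :: nat where "1 / Suc m < X x - t"
      using reals_Archimedean[of "X x - t"] by (auto simp: inverse_eq_divide)
    then have "x \<in> A m"
      using \<open>x \<in> space M\<close> by (simp add: A_def)
    then show "x \<in> (\<Union>m. A m)"
      by blast
  next
    fix x m
    assume "x \<in> A m"
    then show "x \<in> space M" "t < X x"
      using less_le_trans[of t "t + 1 / Suc m" "X x"] by (auto simp: A_def)
  qed
  finally have lim: "(\<lambda>m. measure M (A m)) \<longlonglongrightarrow> measure M {x\<in>space M. t < X x}" .
  have b_nonneg: "0 \<le> b"
    using tail by (rule tail_bound_nonneg)
  have "measure M (A m) \<le> b / t^2" for m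
  proof -
    have positive: "0 < t + 1 / Suc m"
      using t by (simp add: add_nonneg_pos)
    then have "measure M (A m) \<le> b / (t + 1 / Suc m)^2"
      unfolding A_def using tail by simp
    also have "\<dots> \<le> b / t^2"
    proof (cases "t = 0")
      case False
      then show ?thesis
        using t b_nonneg positive by (intro divide_left_mono power_mono mult_pos_pos) auto
    qed (use t in simp)
    finally show ?thesis .
  qed
  then show ?thesis
    by (intro LIMSEQ_le_const2[OF lim]) auto
qed

lemma exists_uniformly_close_set:
  fixes f :: "real \<Rightarrow> 'a \<Rightarrow> real"
  assumes "prob_space \<Omega>" and K: "finite K"
    and meas: "\<forall>k\<in>K. f k \<in> borel_measurable \<Omega>"
    and tail: "\<forall>k\<in>K. \<forall>\<delta>'>0. measure \<Omega> {\<alpha>\<in>space \<Omega>. \<bar>f k \<alpha> - \<mu> k\<bar> \<ge> \<delta>'} \<le> b / \<delta>'^2"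
    and t: "0 \<le> t" "t = 0 \<Longrightarrow> b = 0"
  shows "\<exists>G\<in>sets \<Omega>. measure \<Omega> G \<ge> 1 - real (card K) * (b / t^2) \<and>
           (\<forall>\<alpha>\<in>G. \<forall>k\<in>K. \<bar>f k \<alpha> - \<mu> k\<bar> \<le> t)"
proof -
  interpret prob_space \<Omega> by fact
  define bad where "bad k = {\<alpha>\<in>space \<Omega>. t < \<bar>f k \<alpha> - \<mu> k\<bar>}" for k
  have bad_sets: "bad k \<in> sets \<Omega>" and bad_measure: "measure \<Omega> (bad k) \<le> b / t^2"
    if "k \<in> K" for k
  proof -
    have [measurable]: "f k \<in> borel_measurable \<Omega>"
      using meas that by blast
    show "bad k \<in> sets \<Omega>"
      unfolding bad_def by measurable
    show "measure \<Omega> (bad k) \<le> b / t^2"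
      unfolding bad_def
      by (rule measure_gt_le_of_tail_bound[OF finite_measure_axioms _ bspec[OF tail that] t]) measurable
  qed
  define G where "G = space \<Omega> - (\<Union>k\<in>K. bad k)"
  have bad_union: "(\<Union>k\<in>K. bad k) \<in> sets \<Omega>"
    using bad_sets K by blast
  have "measure \<Omega> (\<Union>k\<in>K. bad k) \<le> (\<Sum>k\<in>K. measure \<Omega> (bad k))"
    by (rule measure_UNION_le[OF K bad_sets])
  also have "\<dots> \<le> real (card K) * (b / t^2)"
    using sum_mono[OF bad_measure] by simp
  finally have "1 - real (card K) * (b / t^2) \<le> measure \<Omega> G"
    unfolding G_def prob_compl[OF bad_union] by simp
  moreover have "G \<in> sets \<Omega>"
    unfolding G_def using bad_union by blast
  moreover have "\<forall>\<alpha>\<in>G. \<forall>k\<in>K. \<bar>f k \<alpha> - \<mu> k\<bar> \<le> t"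
    unfolding G_def bad_def by (auto simp: not_less)
  ultimately show ?thesis
    by blast
qed

lemma poly_times_exp_decay_tendsto_zero:
  assumes "c > 0"
  shows "(\<lambda>n::nat. real n ^ d * exp (- c * real n)) \<longlonglongrightarrow> 0"
proof -
  have "(\<lambda>n::nat. (c * real n) ^ d / exp (c * real n)) \<longlonglongrightarrow> 0"
    by (rule filterlim_compose[OF tendsto_power_div_exp_0])
      (intro filterlim_tendsto_pos_mult_at_top[OF tendsto_const assms] filterlim_real_sequentially)
  then have "(\<lambda>n::nat. (c * real n) ^ d / exp (c * real n) / c ^ d) \<longlonglongrightarrow> 0 / c ^ d"
    by (rule tendsto_divide) (use assms in auto)
  then have "(\<lambda>n::nat. (c * real n) ^ d / exp (c * real n) / c ^ d) \<longlonglongrightarrow> 0"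
    by (simp only: div_0)
  also have "(\<lambda>n::nat. (c * real n) ^ d / exp (c * real n) / c ^ d) = (\<lambda>n. real n ^ d * exp (- c * real n))"
    using assms by (simp add: fun_eq_iff exp_minus field_simps)
  finally show ?thesis .
qed

lemma poly_bounded_mult:
  assumes "poly_bounded f" and "poly_bounded g"
  shows "poly_bounded (\<lambda>n. f n * g n)"
proof -
  obtain d e where "f \<in> O(\<lambda>n. real n ^ d)" and "g \<in> O(\<lambda>n. real n ^ e)"
    using assms by (auto simp: poly_bounded_def)
  then have "(\<lambda>n. f n * g n) \<in> O(\<lambda>n. real n ^ (d + e))"
    unfolding power_add by (rule landau_o.big.mult)
  then show ?thesis
    unfolding poly_bounded_def by blast
qed

lemma exp_small_mult_poly_bounded:
  assumes "poly_bounded f" and "exp_small h"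
  shows "exp_small (\<lambda>n. f n * h n)"
proof -
  obtain d where f: "f \<in> O(\<lambda>n. real n ^ d)"
    using assms(1) by (auto simp: poly_bounded_def)
  obtain c where c: "c > 0" and h: "h \<in> O(\<lambda>n. exp (- c * real n))"
    using assms(2) by (auto simp: exp_small_def)
  have "(\<lambda>n. f n * h n) \<in> O(\<lambda>n. real n ^ d * exp (- (c/2) * real n) * exp (- (c/2) * real n))"
    using landau_o.big.mult[OF f h] by (simp add: mult.assoc flip: exp_add)
  also have "(\<lambda>n. real n ^ d * exp (- (c/2) * real n) * exp (- (c/2) * real n))
      \<in> O(\<lambda>n. 1 * exp (- (c/2) * real n))"
    using c poly_times_exp_decay_tendsto_zero[of "c/2" d]
    by (intro landau_o.big.mult bigoI_tendsto[where c = 0]) auto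
  finally show ?thesis
    unfolding exp_small_def using c by (intro exI[of _ "c/2"]) simp
qed

lemma exp_small_powr:
  assumes "exp_small h" and "\<forall>n. 0 \<le> h n" and "a > 0"
  shows "exp_small (\<lambda>n. h n powr a)"
proof -
  obtain c where c: "c > 0" and h: "h \<in> O(\<lambda>n. exp (- c * real n))"
    using assms(1) by (auto simp: exp_small_def)
  have "(\<lambda>n. \<bar>h n\<bar> powr a) \<in> O(\<lambda>n. \<bar>exp (- c * real n)\<bar> powr a)"
    using assms(3) by (intro bigo_powr[OF h]) simp
  moreover have "\<bar>exp (- c * real n)\<bar> powr a = exp (- (a * c) * real n)" for n
    by (simp add: powr_def)
  ultimately show ?thesis
    unfolding exp_small_def using assms c by (intro exI[of _ "a * c"]) simp
qed

lemma exp_small_cmult: "exp_small h \<Longrightarrow> exp_small (\<lambda>n. a * h n)"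
  unfolding exp_small_def by (cases "a = 0") auto

lemma exp_small_eventually_cong:
  "exp_small f \<Longrightarrow> eventually (\<lambda>n. f n = g n) sequentially \<Longrightarrow> exp_small g"
  unfolding exp_small_def using landau_o.big.in_cong by blast

lemma exp_small_tendsto_zero:
  assumes "exp_small h"
  shows "h \<longlonglongrightarrow> 0"
proof -
  obtain c where c: "c > 0" and h: "h \<in> O(\<lambda>n. exp (- c * real n))"
    using assms by (auto simp: exp_small_def)
  have "(\<lambda>n::nat. exp (- c * real n)) \<in> o(\<lambda>_. 1)"
    using poly_times_exp_decay_tendsto_zero[OF c, of 0] by (intro smalloI_tendsto) auto
  with h have "h \<in> o(\<lambda>_. 1)"
    by (rule landau_o.big_small_trans)
  then show ?thesis
    using smalloD_tendsto by fastforce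
qed

lemma exp_small_eventually_le:
  assumes "exp_small h" and "0 < c"
  obtains n0 where "\<And>n. n0 \<le> n \<Longrightarrow> h n \<le> c"
proof -
  have "eventually (\<lambda>n. h n < c) sequentially"
    using order_tendstoD(2)[OF exp_small_tendsto_zero[OF assms(1)] assms(2)] .
  then show thesis
    using that unfolding eventually_sequentially by (meson less_imp_le)
qed

lemma divide_square_quarter_powr:
  fixes b :: real
  assumes "0 \<le> b"
  shows "b / (b powr (1/4) / 4)^2 = 16 * b powr (1/2)"
proof (cases "b = 0")
  case False
  have "(b powr (1/4) / 4)^2 = b powr (1/2) / 16"
    by (simp add: power2_eq_square power_divide flip: powr_add)
  moreover have "b powr (1/2) * b powr (1/2) = b"
    using assms by (simp flip: powr_add)
  moreover have "b powr (1/2) \<noteq> 0"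
    using False by simp
  ultimately show ?thesis
    by (metis divide_divide_eq_right nonzero_mult_div_cancel_left times_divide_eq_left mult.commute)
qed simp

lemma exists_set_guess_success_le:
  fixes f :: "real \<Rightarrow> 'a \<Rightarrow> real"
  assumes "prob_space \<Omega>" and K: "finite K"
    and meas: "\<forall>k\<in>K. f k \<in> borel_measurable \<Omega>"
    and tail: "\<forall>k\<in>K. \<forall>\<delta>'>0. measure \<Omega> {\<alpha>\<in>space \<Omega>. \<bar>f k \<alpha> - \<mu> k\<bar> \<ge> \<delta>'} \<le> b / \<delta>'^2"
    and \<mu>_nonneg: "\<forall>k\<in>K. 0 \<le> \<mu> k" and \<mu>_sum: "(\<Sum>k\<in>K. \<mu> k) = 1"
    and small: "real N * real (card K) * b powr (1/4) / 4 \<le> 1/4"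
  shows "\<exists>G\<in>sets \<Omega>. 1 - real (card K) * (16 * b powr (1/2)) \<le> measure \<Omega> G \<and>
           (\<forall>\<alpha>\<in>G. \<forall>\<Phi> g. (\<forall>y. 0 \<le> g y \<and> g y \<le> 1) \<longrightarrow>
              guess_success K N (\<lambda>k. f k \<alpha>) \<mu> \<Phi> g \<le> 1/2 + real N * real (card K) * b powr (1/4) / 4 \<and>
              (real N * real (card K) * b powr (1/4) / 4 \<le> 1/100 \<longrightarrow>
                 guess_success K N (\<lambda>k. f k \<alpha>) \<mu> \<Phi> g \<le> 51/100))"
proof -
  obtain k where "k \<in> K"
    using \<mu>_sum by force
  then have b_nonneg: "0 \<le> b"
    by (rule tail_bound_nonneg[OF bspec[OF tail]])
  define t where "t = b powr (1/4) / 4"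
  have "b / t^2 = 16 * b powr (1/2)"
    using b_nonneg unfolding t_def by (rule divide_square_quarter_powr)
  moreover have "0 \<le> t" and "t = 0 \<Longrightarrow> b = 0"
    using b_nonneg by (auto simp: t_def)
  ultimately obtain G where G: "G \<in> sets \<Omega>" "1 - real (card K) * (16 * b powr (1/2)) \<le> measure \<Omega> G"
    and close: "\<forall>\<alpha>\<in>G. \<forall>k\<in>K. \<bar>f k \<alpha> - \<mu> k\<bar> \<le> t"
    using exists_uniformly_close_set[OF assms(1) K meas tail] by metis
  have guess: "guess_success K N (\<lambda>k. f k \<alpha>) \<mu> \<Phi> g
      \<le> 1/2 + real N * real (card K) * b powr (1/4) / 4 \<and>
      (real N * real (card K) * b powr (1/4) / 4 \<le> 1/100 \<longrightarrow>
        guess_success K N (\<lambda>k. f k \<alpha>) \<mu> \<Phi> g \<le> 51/100)"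
    if "\<alpha> \<in> G" and "\<forall>y. 0 \<le> g y \<and> g y \<le> 1" for \<alpha> \<Phi> g
  proof -
    have "(\<Sum>k\<in>K. \<bar>f k \<alpha> - \<mu> k\<bar>) \<le> real (card K) * t"
      using sum_mono[of K "\<lambda>k. \<bar>f k \<alpha> - \<mu> k\<bar>" "\<lambda>_. t"] close that(1) by simp
    moreover have "real N * (real (card K) * t) \<le> 1/4"
      using small by (simp add: t_def)
    ultimately have "guess_success K N (\<lambda>k. f k \<alpha>) \<mu> \<Phi> g \<le> 1/2 + real N * (real (card K) * t)"
      by (rule guess_success_le_of_close[OF K \<mu>_nonneg \<mu>_sum _ _ that(2)])
    then show ?thesis
      by (auto simp: t_def)
  qed
  show ?thesis
    using G guess by blast
qed

theorem corollary3:
  fixes \<Omega> :: "nat \<Rightarrow> 'a measure"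
    and \<rho> :: "nat \<Rightarrow> 'a \<Rightarrow> complex mat"
    and K :: "nat \<Rightarrow> real set"
    and M :: "nat \<Rightarrow> real \<Rightarrow> complex mat"
    and \<mu> :: "nat \<Rightarrow> real \<Rightarrow> real"
    and \<beta> :: "nat \<Rightarrow> real"
    and N :: "nat \<Rightarrow> nat"
  assumes prob: "\<forall>n. prob_space (\<Omega> n)"
    and states: "\<forall>n. \<forall>\<alpha>\<in>space (\<Omega> n). density_matrix (2^n) (\<rho> n \<alpha>)"
    and povm: "\<forall>n. is_povm (2^n) (K n) (M n)"
    and povm_size: "poly_bounded (\<lambda>n. real (card (K n)))"
    and meas: "\<forall>n. \<forall>k\<in>K n. (\<lambda>\<alpha>. outcome_prob (\<rho> n \<alpha>) (M n k)) \<in> borel_measurable (\<Omega> n)"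
    and conc: "\<forall>n. \<forall>k\<in>K n. \<forall>\<delta>'>0.
       measure (\<Omega> n) {\<alpha>\<in>space (\<Omega> n). \<bar>outcome_prob (\<rho> n \<alpha>) (M n k) - \<mu> n k\<bar> \<ge> \<delta>'}
         \<le> \<beta> n / \<delta>'^2"
    and beta_small: "exp_small \<beta>"
    and fixed_dist: "\<forall>n. (\<forall>k\<in>K n. 0 \<le> \<mu> n k) \<and> (\<Sum>k\<in>K n. \<mu> n k) = 1"
    and N_poly: "poly_bounded (\<lambda>n. real (N n))"
  shows "\<exists>\<delta> n0. exp_small \<delta> \<and>
    (\<forall>n. \<exists>G\<in>sets (\<Omega> n). measure (\<Omega> n) G \<ge> 1 - \<delta> n \<and>
      (\<forall>\<alpha>\<in>G. \<forall>\<Phi> :: real list \<Rightarrow> real list. \<forall>g :: real list \<Rightarrow> real.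
         (\<forall>y. 0 \<le> g y \<and> g y \<le> 1) \<longrightarrow>
           guess_success (K n) (N n) (\<lambda>k. outcome_prob (\<rho> n \<alpha>) (M n k)) (\<mu> n) \<Phi> g
             \<le> 1/2 + real (N n) * real (card (K n)) * \<beta> n powr (1/4) / 4
         \<and> (n \<ge> n0 \<longrightarrow>
           guess_success (K n) (N n) (\<lambda>k. outcome_prob (\<rho> n \<alpha>) (M n k)) (\<mu> n) \<Phi> g
             \<le> 51/100)))"
proof -
  have K: "finite (K n)" for n
    using povm by (simp add: is_povm_def)
  have \<beta>_nonneg: "\<forall>n. 0 \<le> \<beta> n"
  proof
    fix n
    obtain k where "k \<in> K n"
      using conjunct2[OF fixed_dist[rule_format, of n]] by force
    then show "0 \<le> \<beta> n"
      by (rule tail_bound_nonneg[OF bspec[OF spec[OF conc, of n]]])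
  qed
  define adv where "adv n = real (N n) * real (card (K n)) * \<beta> n powr (1/4) / 4" for n
  have "exp_small adv"
    using exp_small_mult_poly_bounded[OF poly_bounded_mult[OF N_poly povm_size]
        exp_small_cmult[OF exp_small_powr[OF beta_small \<beta>_nonneg], of "1/4" "1/4"]]
    by (simp add: adv_def[abs_def])
  then obtain n0 where n0: "\<And>n. n0 \<le> n \<Longrightarrow> adv n \<le> 1/100"
    by (rule exp_small_eventually_le[where c = "1/100"]) auto
  define \<delta> where "\<delta> n = (if n0 \<le> n then real (card (K n)) * (16 * \<beta> n powr (1/2)) else 1)" for n
  have "exp_small \<delta>"
    using exp_small_mult_poly_bounded[OF povm_size
        exp_small_cmult[OF exp_small_powr[OF beta_small \<beta>_nonneg], of "1/2" 16]]
    by (rule exp_small_eventually_cong) (auto simp: \<delta>_def eventually_sequentially)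
  moreover have "\<exists>G\<in>sets (\<Omega> n). measure (\<Omega> n) G \<ge> 1 - \<delta> n \<and>
      (\<forall>\<alpha>\<in>G. \<forall>\<Phi> :: real list \<Rightarrow> real list. \<forall>g :: real list \<Rightarrow> real.
         (\<forall>y. 0 \<le> g y \<and> g y \<le> 1) \<longrightarrow>
           guess_success (K n) (N n) (\<lambda>k. outcome_prob (\<rho> n \<alpha>) (M n k)) (\<mu> n) \<Phi> g
             \<le> 1/2 + real (N n) * real (card (K n)) * \<beta> n powr (1/4) / 4
         \<and> (n \<ge> n0 \<longrightarrow>
           guess_success (K n) (N n) (\<lambda>k. outcome_prob (\<rho> n \<alpha>) (M n k)) (\<mu> n) \<Phi> g
             \<le> 51/100))" for n
  proof (cases "n0 \<le> n")
    case True
    then have "adv n \<le> 1/100"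
      by (rule n0)
    moreover have "\<delta> n = real (card (K n)) * (16 * \<beta> n powr (1/2))"
      using True by (simp add: \<delta>_def)
    moreover note exists_set_guess_success_le[OF spec[OF prob, of n] K spec[OF meas, of n]
        spec[OF conc, of n] conjunct1[OF spec[OF fixed_dist, of n]] conjunct2[OF spec[OF fixed_dist, of n]],
        where N = "N n"]
    ultimately show ?thesis
      using True by (simp add: adv_def)
  next
    case False
    then show ?thesis
      by (intro bexI[of _ "{}"]) (simp_all add: \<delta>_def)
  qed
  ultimately show ?thesis
    by blast
qed

end
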